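(* Assume $x(0)=0$ and $x'(0)=0$. If $x(t)\to0$ and $x'(t)\to0$ as $t\to\infty$, then $y_1(t)\to0$ as $t\to\infty$.
   Context: Standing assumptions: $\omega>0$ is a constant; $p\in C^1([0,\infty))$ with $p(t)>0$ and $p'(t)<0$ for all $t\ge0$, $\int_0^\infty p(t)\,dt=\infty$ and $\int_0^\infty p(t)^2\,dt<\infty$; $f\in L^1_{\mathrm{loc}}([0,\infty))$. $x$ denotes the solution of $x''(t)+p(t)x'(t)+\omega^2x(t)=f(t)$, $t\ge0$. $y_1(t)=\int_0^te^{-\omega^2(t-s)}f(s)\,ds$, i.e. the solution of $y_1'=-\omega^2y_1+f$, $y_1(0)=0$. *)

theory Defs
  imports "HOL-Analysis.Analysis"
begin

end

theory Submission
  imports Defs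
begin

(* Since x'' = f - p x' - \<omega>^2 x, integrating f against the kernel exp (- \<omega>^2 (t - s)) by parts gives
     y_1 t = x' t + exp (- \<omega>^2 t) * int_0^t exp (\<omega>^2 s) * u s ds,   u = p x' + \<omega>^2 x - \<omega>^2 x',
   where u tends to 0 because x and x' do and p is bounded, and such an exponential average of a
   function tending to 0 tends to 0.
   The equation for x' is stated with the Henstock-Kurzweil integral, which is 0 on non-integrable
   functions, so it must first be shown that x'' is locally integrable. If integrability failed
   beyond a first time a, then before a the variation-of-constants formula for v' = q - p v
   (q = f - \<omega>^2 x) extends x' continuously to a, and after a the equation forces x' to be
   constant; either way x'' would be integrable slightly past a. *)

lemma absolutely_integrable_continuous_mult:
  fixes g h :: "real \<Rightarrow> real"
  assumes "continuous_on {a..b} h" and "g absolutely_integrable_on {a..b}"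
  shows "(\<lambda>s. h s * g s) absolutely_integrable_on {a..b}"
  using assms
  by (intro absolutely_integrable_bounded_measurable_product_real)
     (auto intro: continuous_imp_measurable_on_sets_lebesgue compact_imp_bounded compact_continuous_image)

lemma integral_real_derivative_eq_diff:
  fixes h h' :: "real \<Rightarrow> real"
  assumes "a \<le> b" and "\<And>r. r \<in> {a..b} \<Longrightarrow> (h has_real_derivative h' r) (at r within {a..b})"
  shows "integral {a..b} h' = h b - h a"
  using assms
  by (intro integral_unique fundamental_theorem_of_calculus)
     (auto simp: has_real_derivative_iff_has_vector_derivative[symmetric])

lemma continuous_on_indefinite_integral_eq:
  fixes g v :: "real \<Rightarrow> real"
  assumes "g integrable_on {a..b}" and "\<And>s. s \<in> {a..b} \<Longrightarrow> v s = c + integral {a..s} g"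
  shows "continuous_on {a..b} v"
proof (rule continuous_on_eq)
  show "continuous_on {a..b} (\<lambda>s. c + integral {a..s} g)"
    using assms(1) by (intro continuous_intros indefinite_integral_continuous_1)
qed (simp add: assms(2))

lemma integral_lebesgue_on_restrict_eq_integral:
  fixes h :: "real \<Rightarrow> real"
  assumes "h absolutely_integrable_on {c..d}" and "S \<in> sets lebesgue" and "S \<inter> {a..b} = {c..d}"
  shows "(\<integral>s. (if s \<in> S then h s else 0) \<partial>lebesgue_on {a..b}) = integral {c..d} h"
  using assms by (simp add: Lebesgue_Measure.integral_restrict_Int absolutely_integrable_imp_integrable
      lebesgue_integral_eq_integral)

lemma lebesgue_on_Icc_Fubini_triangle:
  fixes g k :: "real \<Rightarrow> real"
  assumes g: "g absolutely_integrable_on {a..b}" and k: "continuous_on {a..b} k"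
  defines "M \<equiv> lebesgue_on {a..b}"
  shows "(\<integral>r. (\<integral>s. (if s \<le> r then k r * g s else 0) \<partial>M) \<partial>M) =
         (\<integral>s. (\<integral>r. (if s \<le> r then k r * g s else 0) \<partial>M) \<partial>M)"
proof -
  interpret M: finite_measure M
    unfolding M_def by (rule finite_measure_lebesgue_on) auto
  interpret P: pair_sigma_finite M M
    by (simp add: pair_sigma_finite_def M.sigma_finite_measure_axioms)
  have gM: "integrable M g"
    using g unfolding M_def by (simp add: absolutely_integrable_imp_integrable)
  have [measurable]: "g \<in> borel_measurable M" "k \<in> borel_measurable M"
      "(\<lambda>s. s) \<in> borel_measurable M"
    using gM k unfolding M_def
    by (auto intro!: continuous_imp_measurable_on_sets_lebesgue continuous_on_id)
  obtain B where B: "\<And>r. r \<in> {a..b} \<Longrightarrow> \<bar>k r\<bar> \<le> B"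
    using compact_imp_bounded[OF compact_continuous_image[OF k compact_Icc]]
    unfolding bounded_iff by (metis image_eqI real_norm_def)
  have "integrable (M \<Otimes>\<^sub>M M) (\<lambda>(s, r). if s \<le> r then k r * g s else 0)"
  proof (rule Bochner_Integration.integrable_bound)
    show "integrable (M \<Otimes>\<^sub>M M) (\<lambda>z. B * \<bar>g (fst z)\<bar>)"
      by (rule P.Fubini_integrable) (use gM in auto)
    show "(\<lambda>(s, r). if s \<le> r then k r * g s else 0) \<in> borel_measurable (M \<Otimes>\<^sub>M M)"
      unfolding case_prod_beta by measurable
    show "AE z in M \<Otimes>\<^sub>M M. norm ((\<lambda>(s, r). if s \<le> r then k r * g s else 0) z) \<le> norm (B * \<bar>g (fst z)\<bar>)"
      by (intro AE_I2) (auto simp: space_pair_measure M_def abs_mult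
          intro!: mult_right_mono order_trans[OF B abs_ge_self])
  qed
  then show ?thesis
    by (rule P.Fubini_integral)
qed

lemma integral_indefinite_integral_swap:
  fixes g k :: "real \<Rightarrow> real"
  assumes g: "g absolutely_integrable_on {a..b}" and k: "continuous_on {a..b} k"
  shows "integral {a..b} (\<lambda>r. k r * integral {a..r} g) =
         integral {a..b} (\<lambda>s. g s * integral {s..b} k)"
proof -
  define M where "M = lebesgue_on {a..b}"
  have space_M: "space M = {a..b}"
    by (simp add: M_def)
  have integral_M: "(\<integral>s. h s \<partial>M) = integral {a..b} h"
    if "h absolutely_integrable_on {a..b}" for h :: "real \<Rightarrow> real"
    using that unfolding M_def
    by (simp add: absolutely_integrable_imp_integrable lebesgue_integral_eq_integral)
  have inner_fst: "(\<integral>s. (if s \<le> r then k r * g s else 0) \<partial>M) = k r * integral {a..r} g"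
    if "r \<in> {a..b}" for r
  proof -
    have "(\<integral>s. (if s \<in> {..r} then g s else 0) \<partial>M) = integral {a..r} g"
      unfolding M_def using that
      by (intro integral_lebesgue_on_restrict_eq_integral absolutely_integrable_on_subinterval[OF g]) auto
    moreover have "(\<lambda>s. if s \<le> r then k r * g s else 0) = (\<lambda>s. k r * (if s \<in> {..r} then g s else 0))"
      by auto
    ultimately show ?thesis by simp
  qed
  have inner_snd: "(\<integral>r. (if s \<le> r then k r * g s else 0) \<partial>M) = g s * integral {s..b} k"
    if "s \<in> {a..b}" for s
  proof -
    have "(\<integral>r. (if r \<in> {s..} then k r else 0) \<partial>M) = integral {s..b} k"
      unfolding M_def using that
      by (intro integral_lebesgue_on_restrict_eq_integral absolutely_integrable_continuous_real
          continuous_on_subset[OF k]) auto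
    moreover have "(\<lambda>r. if s \<le> r then k r * g s else 0) = (\<lambda>r. (if r \<in> {s..} then k r else 0) * g s)"
      by auto
    ultimately show ?thesis by simp
  qed
  have "integral {a..b} (\<lambda>r. k r * integral {a..r} g) = (\<integral>r. k r * integral {a..r} g \<partial>M)"
    using g unfolding absolutely_integrable_on_def
    by (intro integral_M[symmetric] absolutely_integrable_continuous_real continuous_intros k
        indefinite_integral_continuous_1) auto
  also have "\<dots> = (\<integral>r. (\<integral>s. (if s \<le> r then k r * g s else 0) \<partial>M) \<partial>M)"
    by (intro Bochner_Integration.integral_cong) (simp_all add: inner_fst space_M)
  also have "\<dots> = (\<integral>s. (\<integral>r. (if s \<le> r then k r * g s else 0) \<partial>M) \<partial>M)"
    unfolding M_def using g k by (rule lebesgue_on_Icc_Fubini_triangle)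
  also have "\<dots> = (\<integral>s. g s * integral {s..b} k \<partial>M)"
    by (intro Bochner_Integration.integral_cong) (simp_all add: inner_snd space_M)
  also have "\<dots> = integral {a..b} (\<lambda>s. g s * integral {s..b} k)"
  proof (rule integral_M)
    have "continuous_on {a..b} (\<lambda>s. integral {s..b} k)"
      by (intro indefinite_integral_continuous_1' integrable_continuous_real k)
    then have "(\<lambda>s. integral {s..b} k * g s) absolutely_integrable_on {a..b}"
      using g by (rule absolutely_integrable_continuous_mult)
    then show "(\<lambda>s. g s * integral {s..b} k) absolutely_integrable_on {a..b}"
      by (simp add: mult.commute)
  qed
  finally show ?thesis .
qed

lemma integral_mult_by_parts_indefinite_integral:
  fixes g h h' G :: "real \<Rightarrow> real"
  assumes "a \<le> b" and g: "g absolutely_integrable_on {a..b}"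
    and G: "\<And>r. r \<in> {a..b} \<Longrightarrow> G r = integral {a..r} g"
    and h: "\<And>r. r \<in> {a..b} \<Longrightarrow> (h has_real_derivative h' r) (at r within {a..b})"
    and h': "continuous_on {a..b} h'"
  shows "integral {a..b} (\<lambda>s. h s * g s) = h b * G b - integral {a..b} (\<lambda>r. h' r * G r)"
proof -
  have ftc: "integral {s..b} h' = h b - h s" if "s \<in> {a..b}" for s
    using that by (intro integral_real_derivative_eq_diff DERIV_subset[OF h]) auto
  have "continuous_on {a..b} h"
    unfolding continuous_on_eq_continuous_within using h DERIV_continuous by blast
  then have hg: "(\<lambda>s. h s * g s) absolutely_integrable_on {a..b}"
    using g by (rule absolutely_integrable_continuous_mult)
  have "integral {a..b} (\<lambda>r. h' r * G r) = integral {a..b} (\<lambda>r. h' r * integral {a..r} g)"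
    by (rule integral_cong) (simp add: G)
  also have "\<dots> = integral {a..b} (\<lambda>s. g s * integral {s..b} h')"
    by (rule integral_indefinite_integral_swap[OF g h'])
  also have "\<dots> = integral {a..b} (\<lambda>s. h b * g s - h s * g s)"
    by (rule integral_cong) (simp add: ftc algebra_simps)
  also have "\<dots> = h b * integral {a..b} g - integral {a..b} (\<lambda>s. h s * g s)"
  proof -
    have "(\<lambda>s. h b * g s) integrable_on {a..b}"
      using g integrable_on_cmult_left[of g "{a..b}" "h b"] by (simp add: absolutely_integrable_on_def)
    moreover have "(\<lambda>s. h s * g s) integrable_on {a..b}"
      using hg by (simp add: absolutely_integrable_on_def)
    ultimately show ?thesis
      by (simp add: integral_diff)
  qed
  finally show ?thesis
    using G[of b] \<open>a \<le> b\<close> by simp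
qed

lemma variation_of_constants:
  fixes p q v :: "real \<Rightarrow> real"
  assumes "a \<le> b" and p: "continuous_on {a..b} p" and q: "q absolutely_integrable_on {a..b}"
    and int: "(\<lambda>s. q s - p s * v s) integrable_on {a..b}"
    and v: "\<And>s. s \<in> {a..b} \<Longrightarrow> v s = v a + integral {a..s} (\<lambda>r. q r - p r * v r)"
  shows "exp (integral {a..b} p) * v b = v a + integral {a..b} (\<lambda>s. exp (integral {a..s} p) * q s)"
proof -
  define h where "h s = exp (integral {a..s} p)" for s
  have h_deriv: "(h has_real_derivative p r * h r) (at r within {a..b})" if "r \<in> {a..b}" for r
    unfolding h_def using integral_has_real_derivative[OF p that] by (auto intro!: derivative_eq_intros)
  then have h: "continuous_on {a..b} h"
    unfolding continuous_on_eq_continuous_within using DERIV_continuous by blast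
  have v_cont: "continuous_on {a..b} v"
    using int v by (rule continuous_on_indefinite_integral_eq)
  have G: "v r - v a = integral {a..r} (\<lambda>s. q s - p s * v s)" if "r \<in> {a..b}" for r
    using v[OF that] by linarith
  have g: "(\<lambda>s. q s - p s * v s) absolutely_integrable_on {a..b}"
    using q absolutely_integrable_continuous_real[OF continuous_on_mult[OF p v_cont]]
    by (rule set_integral_diff(1))
  have php: "continuous_on {a..b} (\<lambda>s. p s * h s)"
    using p h by (rule continuous_on_mult)
  have phv: "(\<lambda>s. p s * h s * v s) integrable_on {a..b}"
    using integrable_continuous_real[OF continuous_on_mult[OF php v_cont]] .
  (* Integrate by parts against the integrating factor h; the terms in p h v cancel. *)
  have "integral {a..b} (\<lambda>s. h s * q s) =
        integral {a..b} (\<lambda>s. h s * (q s - p s * v s)) + integral {a..b} (\<lambda>s. p s * h s * v s)"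
  proof -
    have "(\<lambda>s. h s * (q s - p s * v s)) integrable_on {a..b}"
      using absolutely_integrable_continuous_mult[OF h g] by (simp add: absolutely_integrable_on_def)
    then show ?thesis
      using phv by (simp add: integral_add[symmetric] algebra_simps)
  qed
  also have "integral {a..b} (\<lambda>s. h s * (q s - p s * v s)) =
             h b * (v b - v a) - integral {a..b} (\<lambda>r. p r * h r * (v r - v a))"
    by (rule integral_mult_by_parts_indefinite_integral[OF \<open>a \<le> b\<close> g G h_deriv php])
  also have "integral {a..b} (\<lambda>r. p r * h r * (v r - v a)) =
             integral {a..b} (\<lambda>s. p s * h s * v s) - v a * (h b - 1)"
  proof -
    have "(\<lambda>r. v a * (p r * h r)) integrable_on {a..b}"
      using integrable_continuous_real[OF continuous_on_mult[OF continuous_on_const php]] .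
    moreover have "integral {a..b} (\<lambda>r. p r * h r) = h b - 1"
      using integral_real_derivative_eq_diff[OF \<open>a \<le> b\<close> h_deriv] by (simp add: h_def)
    moreover have "integral {a..b} (\<lambda>r. p r * h r * (v r - v a)) =
                   integral {a..b} (\<lambda>r. p r * h r * v r - v a * (p r * h r))"
      by (rule integral_cong) (simp add: algebra_simps)
    ultimately show ?thesis
      using phv by (simp add: integral_diff)
  qed
  finally show ?thesis
    by (simp add: h_def algebra_simps)
qed

lemma integrable_on_Icc_threshold:
  fixes g :: "real \<Rightarrow> 'a::banach"
  assumes "l \<le> T" and "\<not> g integrable_on {l..T}"
  obtains a where "l \<le> a"
    and "\<And>t. t < a \<Longrightarrow> g integrable_on {l..t}"
    and "\<And>t. a < t \<Longrightarrow> \<not> g integrable_on {l..t}"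
proof
  define S where "S = {t. l \<le> t \<and> \<not> g integrable_on {l..t}}"
  have "T \<in> S" and bdd: "bdd_below S"
    using assms by (auto simp: S_def intro: bdd_belowI[of _ l])
  then show "l \<le> Inf S"
    by (auto intro: cInf_greatest simp: S_def)
  show "g integrable_on {l..t}" if "t < Inf S" for t
  proof (cases "l \<le> t")
    case True
    then show ?thesis
      using that cInf_lower[OF _ bdd, of t] by (force simp: S_def)
  qed auto
  show "\<not> g integrable_on {l..t}" if "Inf S < t" for t
  proof
    assume "g integrable_on {l..t}"
    obtain s where "s \<in> S" "s < t"
      using \<open>Inf S < t\<close> cInf_less_iff[OF _ bdd] \<open>T \<in> S\<close> by blast
    with \<open>g integrable_on {l..t}\<close> show False
      by (auto simp: S_def intro: integrable_on_subinterval)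
  qed
qed

lemma linear_volterra_solution_extends_continuously:
  fixes p q v :: "real \<Rightarrow> real"
  assumes "0 \<le> a" and p: "continuous_on {0..a} p" and q: "q absolutely_integrable_on {0..a}"
    and int: "\<And>t. t < a \<Longrightarrow> (\<lambda>s. q s - p s * v s) integrable_on {0..t}"
    and v: "\<And>t. 0 \<le> t \<Longrightarrow> t < a \<Longrightarrow> v t = v 0 + integral {0..t} (\<lambda>s. q s - p s * v s)"
  obtains w where "continuous_on {0..a} w" and "\<And>t. 0 \<le> t \<Longrightarrow> t < a \<Longrightarrow> v t = w t"
proof -
  define P where "P t = integral {0..t} p" for t
  define w where "w t = exp (- P t) * (v 0 + integral {0..t} (\<lambda>s. exp (P s) * q s))" for t
  have "continuous_on {0..a} P"
    unfolding P_def by (intro indefinite_integral_continuous_1 integrable_continuous_real p)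
  then have "continuous_on {0..a} (\<lambda>s. exp (P s))"
    by (rule continuous_on_exp)
  then have "(\<lambda>s. exp (P s) * q s) integrable_on {0..a}"
    using absolutely_integrable_continuous_mult q by (simp add: absolutely_integrable_on_def)
  then have "continuous_on {0..a} w"
    unfolding w_def using \<open>continuous_on {0..a} P\<close>
    by (intro continuous_intros indefinite_integral_continuous_1)
  moreover have "v t = w t" if "0 \<le> t" "t < a" for t
  proof -
    have "exp (P t) * v t = v 0 + integral {0..t} (\<lambda>s. exp (P s) * q s)"
      unfolding P_def
    proof (rule variation_of_constants[OF \<open>0 \<le> t\<close>])
      show "continuous_on {0..t} p"
        using p by (rule continuous_on_subset) (use that in auto)
      show "q absolutely_integrable_on {0..t}"
        using q by (rule absolutely_integrable_on_subinterval) (use that in auto)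
      show "v s = v 0 + integral {0..s} (\<lambda>r. q r - p r * v r)" if "s \<in> {0..t}" for s
        using that \<open>t < a\<close> by (intro v) auto
    qed (rule int[OF \<open>t < a\<close>])
    then show ?thesis
      by (simp add: w_def exp_minus field_simps)
  qed
  ultimately show thesis
    by (rule that)
qed

lemma linear_volterra_integrand_integrable:
  fixes p q v :: "real \<Rightarrow> real"
  assumes p: "continuous_on {0..} p"
    and q: "\<And>T. 0 \<le> T \<Longrightarrow> q absolutely_integrable_on {0..T}"
    and v: "\<And>t. 0 \<le> t \<Longrightarrow> v t = v 0 + integral {0..t} (\<lambda>s. q s - p s * v s)"
    and "0 \<le> T"
  shows "(\<lambda>s. q s - p s * v s) integrable_on {0..T}"
proof (rule ccontr)
  define g where "g = (\<lambda>s. q s - p s * v s)"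
  assume "\<not> ?thesis"
  then have "\<not> g integrable_on {0..T}"
    by (simp add: g_def)
  then obtain a where "0 \<le> a" and below: "\<And>t. t < a \<Longrightarrow> g integrable_on {0..t}"
    and above: "\<And>t. a < t \<Longrightarrow> \<not> g integrable_on {0..t}"
    using integrable_on_Icc_threshold[OF \<open>0 \<le> T\<close>] by auto
  have integrable_q_minus: "(\<lambda>s. q s - p s * u s) integrable_on {s..t}"
    if "continuous_on {s..t} u" "0 \<le> s" "s \<le> t" for u s t
  proof (rule integrable_diff)
    show "q integrable_on {s..t}"
      using q[of t] that unfolding absolutely_integrable_on_def by (auto intro: integrable_on_subinterval)
    show "(\<lambda>s. p s * u s) integrable_on {s..t}"
      using that by (intro integrable_continuous_real continuous_on_mult continuous_on_subset[OF p]) auto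
  qed
  obtain w where w: "continuous_on {0..a} w" and v_eq_w: "\<And>t. 0 \<le> t \<Longrightarrow> t < a \<Longrightarrow> v t = w t"
  proof (rule linear_volterra_solution_extends_continuously[OF \<open>0 \<le> a\<close> _ q[OF \<open>0 \<le> a\<close>]])
    show "continuous_on {0..a} p"
      using p by (rule continuous_on_subset) auto
    show "(\<lambda>s. q s - p s * v s) integrable_on {0..t}" if "t < a" for t
      using below[OF that] by (simp add: g_def)
    show "v t = v 0 + integral {0..t} (\<lambda>s. q s - p s * v s)" if "0 \<le> t" for t
      using v[OF that] .
  qed (rule that)
  have "g integrable_on {0..a}"
  proof (rule integrable_spike_finite[of "{a}"])
    show "g s = q s - p s * w s" if "s \<in> {0..a} - {a}" for s
      using that v_eq_w by (simp add: g_def)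
    show "(\<lambda>s. q s - p s * w s) integrable_on {0..a}"
      using w by (rule integrable_q_minus) (use \<open>0 \<le> a\<close> in auto)
  qed simp
  (* Past a the hypothesis on v only sees the junk value 0 of a non-existent integral. *)
  moreover have "g integrable_on {a..a + 1}"
  proof (rule integrable_spike_finite[of "{a}"])
    show "g s = q s - p s * v 0" if "s \<in> {a..a + 1} - {a}" for s
      using that v[of s] above[of s] \<open>0 \<le> a\<close> by (auto simp: g_def not_integrable_integral)
    show "(\<lambda>s. q s - p s * v 0) integrable_on {a..a + 1}"
      using \<open>0 \<le> a\<close> by (intro integrable_q_minus continuous_on_const) auto
  qed simp
  ultimately have "g integrable_on {0..a + 1}"
    by (rule Henstock_Kurzweil_Integration.integrable_combine[OF \<open>0 \<le> a\<close>, rotated]) simp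
  then show False
    using above[of "a + 1"] by simp
qed

lemma linear_volterra_solution_continuous:
  fixes p q v :: "real \<Rightarrow> real"
  assumes p: "continuous_on {0..} p"
    and q: "\<And>T. 0 \<le> T \<Longrightarrow> q absolutely_integrable_on {0..T}"
    and v: "\<And>t. 0 \<le> t \<Longrightarrow> v t = v 0 + integral {0..t} (\<lambda>s. q s - p s * v s)"
  shows "continuous_on {0..T} v"
proof (cases "0 \<le> T")
  case True
  have "(\<lambda>s. q s - p s * v s) integrable_on {0..T}"
    using p q v True by (rule linear_volterra_integrand_integrable)
  then show ?thesis
    by (rule continuous_on_indefinite_integral_eq) (rule v, simp)
qed simp

lemma integral_exp_mult_bound:
  fixes u :: "real \<Rightarrow> real"
  assumes "0 < c" and "a \<le> b" and u: "(\<lambda>s. exp (c * s) * u s) integrable_on {a..b}"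
    and M: "\<And>s. s \<in> {a..b} \<Longrightarrow> \<bar>u s\<bar> \<le> M"
  shows "\<bar>integral {a..b} (\<lambda>s. exp (c * s) * u s)\<bar> \<le> exp (c * b) * M / c"
proof -
  have "0 \<le> M"
    using M[of a] \<open>a \<le> b\<close> by auto
  have "norm (integral {a..b} (\<lambda>s. exp (c * s) * u s)) \<le> integral {a..b} (\<lambda>s. exp (c * s) * M)"
  proof (rule integral_norm_bound_integral[OF u])
    show "(\<lambda>s. exp (c * s) * M) integrable_on {a..b}"
      by (intro integrable_continuous_real continuous_intros)
    show "norm (exp (c * s) * u s) \<le> exp (c * s) * M" if "s \<in> {a..b}" for s
      using M[OF that] by (simp add: abs_mult)
  qed
  also have "\<dots> = exp (c * b) * M / c - exp (c * a) * M / c"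
    using \<open>a \<le> b\<close> \<open>0 < c\<close> by (intro integral_real_derivative_eq_diff) (auto intro!: derivative_eq_intros)
  also have "\<dots> \<le> exp (c * b) * M / c"
    using \<open>0 < c\<close> \<open>0 \<le> M\<close> by simp
  finally show ?thesis
    by simp
qed

lemma exp_convolution_tendsto_zero:
  fixes u :: "real \<Rightarrow> real"
  assumes c: "0 < c" and u: "\<And>T. continuous_on {0..T} u" and lim: "(u \<longlongrightarrow> 0) at_top"
  shows "((\<lambda>t. exp (- c * t) * integral {0..t} (\<lambda>s. exp (c * s) * u s)) \<longlongrightarrow> 0) at_top"
proof (rule tendstoI)
  fix e :: real
  assume "0 < e"
  have "\<forall>\<^sub>F s in at_top. \<bar>u s\<bar> < e * c / 2"
    using tendstoD[OF lim, of "e * c / 2"] \<open>0 < e\<close> c by simp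
  then obtain T0 where "0 \<le> T0" and T0: "\<And>s. T0 \<le> s \<Longrightarrow> \<bar>u s\<bar> \<le> e * c / 2"
    unfolding eventually_at_top_linorder by (metis less_eq_real_def max.cobounded1 max.boundedE)
  have eu: "(\<lambda>s. exp (c * s) * u s) integrable_on {a..b}" if "0 \<le> a" for a b
    by (intro integrable_continuous_real continuous_intros continuous_on_subset[OF u[of b]])
       (use that in auto)
  define H where "H = \<bar>integral {0..T0} (\<lambda>s. exp (c * s) * u s)\<bar>"
  have "((\<lambda>t. exp (- c * t)) \<longlongrightarrow> 0) at_top"
    by (rule filterlim_compose[OF exp_at_bot filterlim_tendsto_neg_mult_at_bot[OF tendsto_const _ filterlim_ident]])
       (use c in simp)
  then have "((\<lambda>t. exp (- c * t) * H) \<longlongrightarrow> 0) at_top"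
    by (rule tendsto_mult_left_zero)
  then have "\<forall>\<^sub>F t in at_top. exp (- c * t) * H < e / 2"
    using \<open>0 < e\<close> by (intro order_tendstoD(2)) auto
  then show "\<forall>\<^sub>F t in at_top. dist (exp (- c * t) * integral {0..t} (\<lambda>s. exp (c * s) * u s)) 0 < e"
    using eventually_ge_at_top[of T0]
  proof eventually_elim
    case (elim t)
    have "integral {0..t} (\<lambda>s. exp (c * s) * u s) =
          integral {0..T0} (\<lambda>s. exp (c * s) * u s) + integral {T0..t} (\<lambda>s. exp (c * s) * u s)"
      using elim \<open>0 \<le> T0\<close> eu by (simp add: Henstock_Kurzweil_Integration.integral_combine)
    moreover have "\<bar>integral {T0..t} (\<lambda>s. exp (c * s) * u s)\<bar> \<le> exp (c * t) * (e * c / 2) / c"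
      using c elim(2) eu[OF \<open>0 \<le> T0\<close>] T0 by (intro integral_exp_mult_bound) auto
    ultimately have "\<bar>integral {0..t} (\<lambda>s. exp (c * s) * u s)\<bar> \<le> H + exp (c * t) * (e / 2)"
      using c unfolding H_def by simp
    then have "exp (- c * t) * \<bar>integral {0..t} (\<lambda>s. exp (c * s) * u s)\<bar> \<le> exp (- c * t) * H + e / 2"
      using mult_left_mono[of _ _ "exp (- c * t)"] by (simp add: distrib_left exp_minus field_simps)
    then show ?case
      using elim(1) by (simp add: abs_mult)
  qed
qed

lemma exp_convolution_derivative_by_parts:
  fixes g r v :: "real \<Rightarrow> real"
  assumes "0 \<le> t" and g: "g absolutely_integrable_on {0..t}" and r: "continuous_on {0..t} r"
    and v: "\<And>s. s \<in> {0..t} \<Longrightarrow> v s = integral {0..s} g"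
  shows "integral {0..t} (\<lambda>s. exp (- c * (t - s)) * (g s + r s)) =
         v t + exp (- c * t) * integral {0..t} (\<lambda>s. exp (c * s) * (r s - c * v s))"
proof -
  have v_cont: "continuous_on {0..t} v"
    using g v by (intro continuous_on_indefinite_integral_eq[where c = 0])
      (auto simp: absolutely_integrable_on_def)
  have "continuous_on {0..t} (\<lambda>s. exp (c * s))"
    by (intro continuous_intros)
  then have eg: "(\<lambda>s. exp (c * s) * g s) integrable_on {0..t}"
    using absolutely_integrable_continuous_mult g by (simp add: absolutely_integrable_on_def)
  have er: "(\<lambda>s. exp (c * s) * r s) integrable_on {0..t}"
    and ev: "(\<lambda>s. c * exp (c * s) * v s) integrable_on {0..t}"
    using r v_cont by (auto intro!: integrable_continuous_real continuous_intros)
  have ibp: "integral {0..t} (\<lambda>s. exp (c * s) * g s) =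
             exp (c * t) * v t - integral {0..t} (\<lambda>s. c * exp (c * s) * v s)"
    by (rule integral_mult_by_parts_indefinite_integral[OF \<open>0 \<le> t\<close> g v])
       (auto intro!: derivative_eq_intros continuous_intros)
  have "integral {0..t} (\<lambda>s. exp (- c * (t - s)) * (g s + r s)) =
        exp (- c * t) * (integral {0..t} (\<lambda>s. exp (c * s) * g s) + integral {0..t} (\<lambda>s. exp (c * s) * r s))"
  proof -
    have "exp (- c * (t - s)) * (g s + r s) = exp (- c * t) * (exp (c * s) * g s + exp (c * s) * r s)" for s
      by (simp add: algebra_simps flip: exp_add)
    then show ?thesis
      using eg er by (simp add: integral_add)
  qed
  also have "\<dots> = v t + exp (- c * t) * (integral {0..t} (\<lambda>s. exp (c * s) * r s) -
                                            integral {0..t} (\<lambda>s. c * exp (c * s) * v s))"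
  proof -
    have "exp (- c * t) * (exp (c * t) * v t) = v t"
      by (simp add: mult.assoc[symmetric] flip: exp_add)
    then show ?thesis
      unfolding ibp by (simp add: distrib_left right_diff_distrib)
  qed
  also have "integral {0..t} (\<lambda>s. exp (c * s) * r s) - integral {0..t} (\<lambda>s. c * exp (c * s) * v s) =
             integral {0..t} (\<lambda>s. exp (c * s) * (r s - c * v s))"
    unfolding integral_diff[OF er ev, symmetric] by (simp add: algebra_simps)
  finally show ?thesis .
qed

lemma deriv_nonpos_imp_le_initial:
  fixes f f' :: "real \<Rightarrow> real"
  assumes f: "\<And>t. 0 \<le> t \<Longrightarrow> (f has_real_derivative f' t) (at t within {0..})"
    and f': "\<And>t. 0 \<le> t \<Longrightarrow> f' t \<le> 0" and "0 \<le> t"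
  shows "f t \<le> f 0"
proof (rule DERIV_nonpos_imp_decreasing_open[OF \<open>0 \<le> t\<close>])
  show "\<exists>y. (f has_real_derivative y) (at s) \<and> y \<le> 0" if "0 < s" "s < t" for s
  proof -
    have "(f has_real_derivative f' s) (at s within {0<..})"
      using f[of s] that by (auto intro: DERIV_subset)
    then show ?thesis
      using that f'[of s] at_within_open[of s "{0<..}"] by auto
  qed
  have "continuous_on {0..} f"
    by (rule DERIV_continuous_on, rule f) simp
  then show "continuous_on {0..t} f"
    by (rule continuous_on_subset) auto
qed

lemma linear_second_order_velocity_continuous:
  fixes p f x x' :: "real \<Rightarrow> real"
  assumes p: "continuous_on {0..} p" and x: "continuous_on {0..} x"
    and f: "\<And>T. 0 \<le> T \<Longrightarrow> f absolutely_integrable_on {0..T}"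
    and x': "\<And>t. 0 \<le> t \<Longrightarrow> x' t = x' 0 + integral {0..t} (\<lambda>s. f s - p s * x' s - c * x s)"
  shows "continuous_on {0..T} x'"
proof (rule linear_volterra_solution_continuous[OF p])
  show "(\<lambda>s. f s - c * x s) absolutely_integrable_on {0..T}" if "0 \<le> T" for T
    by (rule set_integral_diff(1)[OF f[OF that] absolutely_integrable_continuous_real])
       (intro continuous_intros continuous_on_subset[OF x], auto)
  show "x' t = x' 0 + integral {0..t} (\<lambda>s. f s - c * x s - p s * x' s)" if "0 \<le> t" for t
    using x'[OF that] by (simp add: algebra_simps)
qed

lemma linear_second_order_exp_convolution_eq:
  fixes p f x x' :: "real \<Rightarrow> real"
  assumes p: "continuous_on {0..} p" and x: "continuous_on {0..} x"
    and f: "\<And>T. 0 \<le> T \<Longrightarrow> f absolutely_integrable_on {0..T}"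
    and x': "\<And>t. 0 \<le> t \<Longrightarrow> x' t = x' 0 + integral {0..t} (\<lambda>s. f s - p s * x' s - c * x s)"
    and "x' 0 = 0" and "0 \<le> t"
  shows "integral {0..t} (\<lambda>s. exp (- c * (t - s)) * f s) =
         x' t + exp (- c * t) * integral {0..t} (\<lambda>s. exp (c * s) * (p s * x' s + c * x s - c * x' s))"
proof -
  define g where "g = (\<lambda>s. f s - p s * x' s - c * x s)"
  have r: "continuous_on {0..t} (\<lambda>s. p s * x' s + c * x s)"
    using p x linear_second_order_velocity_continuous[OF p x f x']
    by (intro continuous_intros) (auto intro: continuous_on_subset)
  have "g absolutely_integrable_on {0..t}"
  proof -
    have "g = (\<lambda>s. f s - (p s * x' s + c * x s))"
      by (auto simp: g_def)
    then show ?thesis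
      using f[OF \<open>0 \<le> t\<close>] absolutely_integrable_continuous_real[OF r] by (simp add: set_integral_diff(1))
  qed
  moreover have "x' s = integral {0..s} g" if "s \<in> {0..t}" for s
    using x'[of s] that \<open>x' 0 = 0\<close> by (simp add: g_def)
  ultimately have "integral {0..t} (\<lambda>s. exp (- c * (t - s)) * (g s + (p s * x' s + c * x s))) =
      x' t + exp (- c * t) * integral {0..t} (\<lambda>s. exp (c * s) * (p s * x' s + c * x s - c * x' s))"
    using exp_convolution_derivative_by_parts[OF \<open>0 \<le> t\<close> _ r] by blast
  then show ?thesis
    by (simp add: g_def)
qed

theorem mainTheorem4:
  fixes \<omega> :: real and p p' f x x' :: "real \<Rightarrow> real"
  assumes omega_pos: "\<omega> > 0"
    and p_deriv: "\<And>t. t \<ge> 0 \<Longrightarrow> (p has_real_derivative p' t) (at t within {0..})"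
    and p'_cont: "continuous_on {0..} p'"
    and p_pos: "\<And>t. t \<ge> 0 \<Longrightarrow> p t > 0"
    and p'_neg: "\<And>t. t \<ge> 0 \<Longrightarrow> p' t < 0"
    and p_int_infty: "filterlim (\<lambda>T. integral {0..T} p) at_top at_top"
    and p_sq_int: "(\<lambda>t. (p t)\<^sup>2) integrable_on {0..}"
    and f_loc: "\<And>T. T \<ge> 0 \<Longrightarrow> f absolutely_integrable_on {0..T}"
    and x_deriv: "\<And>t. t \<ge> 0 \<Longrightarrow> (x has_real_derivative x' t) (at t within {0..})"
    and x'_eq: "\<And>t. t \<ge> 0 \<Longrightarrow>
        x' t = x' 0 + integral {0..t} (\<lambda>s. f s - p s * x' s - \<omega>\<^sup>2 * x s)"
    and x0: "x 0 = 0"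
    and x'0: "x' 0 = 0"
    and x_lim: "(x \<longlongrightarrow> 0) at_top"
    and x'_lim: "(x' \<longlongrightarrow> 0) at_top"
  shows "((\<lambda>t. integral {0..t} (\<lambda>s. exp (- (\<omega>\<^sup>2) * (t - s)) * f s)) \<longlongrightarrow> 0) at_top"
proof -
  have x: "continuous_on {0..} x"
    by (rule DERIV_continuous_on, rule x_deriv) simp
  have p: "continuous_on {0..} p"
    by (rule DERIV_continuous_on, rule p_deriv) simp
  have p_bound: "\<bar>p t\<bar> \<le> p 0" if "0 \<le> t" for t
    using p_pos[OF that] deriv_nonpos_imp_le_initial[OF p_deriv less_imp_le[OF p'_neg] that] by simp
  have x'_cont: "continuous_on {0..T} x'" for T
    using p x f_loc x'_eq by (rule linear_second_order_velocity_continuous)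
  define u where "u = (\<lambda>s. p s * x' s + \<omega>\<^sup>2 * x s - \<omega>\<^sup>2 * x' s)"
  have "((\<lambda>s. p s * x' s) \<longlongrightarrow> 0) at_top"
  proof (rule Lim_null_comparison)
    show "\<forall>\<^sub>F s in at_top. norm (p s * x' s) \<le> p 0 * \<bar>x' s\<bar>"
      using eventually_ge_at_top[of 0] by eventually_elim (simp add: abs_mult mult_right_mono p_bound)
  qed (rule tendsto_mult_right_zero[OF tendsto_rabs_zero[OF x'_lim]])
  then have "(u \<longlongrightarrow> 0) at_top"
    unfolding u_def using tendsto_diff[OF tendsto_add[OF _ tendsto_mult_right_zero[OF x_lim]]
        tendsto_mult_right_zero[OF x'_lim]] by simp
  moreover have "continuous_on {0..T} u" for T
    unfolding u_def using p x x'_cont by (intro continuous_intros) (auto intro: continuous_on_subset)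
  ultimately have "((\<lambda>t. x' t + exp (- \<omega>\<^sup>2 * t) * integral {0..t} (\<lambda>s. exp (\<omega>\<^sup>2 * s) * u s)) \<longlongrightarrow> 0) at_top"
    using omega_pos by (intro tendsto_add_zero x'_lim exp_convolution_tendsto_zero) auto
  moreover have "\<forall>\<^sub>F t in at_top. x' t + exp (- \<omega>\<^sup>2 * t) * integral {0..t} (\<lambda>s. exp (\<omega>\<^sup>2 * s) * u s) =
      integral {0..t} (\<lambda>s. exp (- (\<omega>\<^sup>2) * (t - s)) * f s)"
    using eventually_ge_at_top[of 0] unfolding u_def
    by eventually_elim (rule linear_second_order_exp_convolution_eq[OF p x f_loc x'_eq x'0, symmetric])
  ultimately show ?thesis
    by (rule Lim_transform_eventually)
qed

end
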